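(* Let $X$ and $Y$ be real Banach spaces with $Y$ a dual Banach space, let $\mathcal{M}:\ell^{\infty}(X,Y)\to Y$ be a generalized invariant mean, and let $P_X^Y:Lip_0(X,Y)\to L(X,Y)$ be defined by $P_X^Y(f)(z)=\mathcal{M}(\phi_f(z))$ for $f\in Lip_0(X,Y)$, $z\in X$, where $\phi_f(z)\in\ell^\infty(X,Y)$ is the map $x\mapsto f(z+x)-f(x)$. Then $Lip_0(X,Y)$ is topologically isomorphic to $L(X,Y)\oplus_1\ker(P_X^Y)$, via $f\mapsto (P_X^Y(f), f-P_X^Y(f))$.
   Context: $Lip_0(X,Y)$ is the Banach space of Lipschitz maps $f:X\to Y$ with $f(0)=0$ and norm $Lip(f)=\sup_{x\neq y}\|f(x)-f(y)\|/\|x-y\|$; $L(X,Y)$ is the space of bounded linear operators with the operator norm, a closed subspace of $Lip_0(X,Y)$. $\ell^\infty(X,Y)$ is the Banach space of bounded maps $X\to Y$ with the sup norm. A generalized invariant mean is a norm-one linear operator $\mathcal{M}:\ell^\infty(X,Y)\to Y$ such that $\mathcal{M}(g_x)=\mathcal{M}(g)$ for all $g\in\ell^\infty(X,Y)$, $x\in X$, where $g_x(z)=g(x+z)$, and $\mathcal{M}(\hat y)=y$ for every $y\in Y$, where $\hat y$ is the constant map with value $y$ (such an operator exists when $Y$ is a dual space). With these, $P_X^Y$ is a well-defined map into $L(X,Y)$. The space $L(X,Y)\oplus_1\ker(P_X^Y)$ carries the norm $\|(T,g)\|=\|T\|+Lip(g)$. *)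

theory Defs
  imports "HOL-Analysis.Analysis"
begin

definition lipnorm :: "('a::real_normed_vector \<Rightarrow> 'b::real_normed_vector) \<Rightarrow> real" where
  "lipnorm f = Sup (insert 0 {norm (f x - f y) / norm (x - y) | x y. x \<noteq> y})"

definition Lip0 :: "('a::real_normed_vector \<Rightarrow> 'b::real_normed_vector) set" where
  "Lip0 = {f. f 0 = 0 \<and> (\<exists>C. C-lipschitz_on UNIV f)}"

definition Lin :: "('a::real_normed_vector \<Rightarrow> 'b::real_normed_vector) set" where
  "Lin = {T. bounded_linear T}"

definition linf :: "('a \<Rightarrow> 'b::real_normed_vector) set" where
  "linf = {g. bounded (range g)}"

definition supn :: "('a \<Rightarrow> 'b::real_normed_vector) \<Rightarrow> real" where
  "supn g = Sup (insert 0 (range (\<lambda>x. norm (g x))))"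

text \<open>Y is a dual Banach space: isometrically isomorphic to the dual of the Banach space 'z.\<close>
definition dual_space_via :: "('b::real_normed_vector \<Rightarrow> ('z::banach \<Rightarrow>\<^sub>L real)) \<Rightarrow> bool" where
  "dual_space_via J \<longleftrightarrow> linear J \<and> bij J \<and> (\<forall>y. norm (J y) = norm y)"

definition gen_inv_mean :: "((('a::real_normed_vector) \<Rightarrow> 'b::real_normed_vector) \<Rightarrow> 'b) \<Rightarrow> bool" where
  "gen_inv_mean M \<longleftrightarrow>
     (\<forall>g\<in>linf. \<forall>h\<in>linf. \<forall>a b::real. M (\<lambda>x. a *\<^sub>R g x + b *\<^sub>R h x) = a *\<^sub>R M g + b *\<^sub>R M h)
   \<and> (\<forall>g\<in>linf. norm (M g) \<le> supn g)
   \<and> Sup (insert 0 {norm (M g) / supn g | g. g \<in> linf \<and> g \<noteq> (\<lambda>_. 0)}) = 1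
   \<and> (\<forall>g\<in>linf. \<forall>x. M (\<lambda>z. g (x + z)) = M g)
   \<and> (\<forall>y. M (\<lambda>_. y) = y)"

definition PXY :: "((('a::real_normed_vector) \<Rightarrow> 'b::real_normed_vector) \<Rightarrow> 'b) \<Rightarrow> ('a \<Rightarrow> 'b) \<Rightarrow> ('a \<Rightarrow> 'b)" where
  "PXY M f = (\<lambda>z. M (\<lambda>x. f (z + x) - f x))"

definition kerP :: "((('a::real_normed_vector) \<Rightarrow> 'b::real_normed_vector) \<Rightarrow> 'b) \<Rightarrow> ('a \<Rightarrow> 'b) set" where
  "kerP M = {g \<in> Lip0. PXY M g = (\<lambda>_. 0)}"

definition sum1norm :: "('a::real_normed_vector \<Rightarrow> 'b::real_normed_vector) \<times> ('a \<Rightarrow> 'b) \<Rightarrow> real" where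
  "sum1norm p = onorm (fst p) + lipnorm (snd p)"

end

theory Submission
  imports Defs
begin

text \<open>For a Lipschitz map \<open>f\<close> the increments \<open>\<phi>\<^sub>f(z) = f(z + \<cdot>) - f\<close> are bounded by
  \<open>Lip(f) \<parallel>z\<parallel>\<close>, so \<open>P(f)(z) = M(\<phi>\<^sub>f(z))\<close> is defined and bounded by \<open>Lip(f) \<parallel>z\<parallel>\<close>.
  Since \<open>\<phi>\<^sub>f(z + w)\<close> is a translate of \<open>\<phi>\<^sub>f(z)\<close> plus \<open>\<phi>\<^sub>f(w)\<close>, translation invariance of \<open>M\<close>
  makes \<open>P(f)\<close> additive, and an additive map bounded by a multiple of the norm is real-linear.
  For linear \<open>T\<close> the increment \<open>\<phi>\<^sub>T(z)\<close> is the constant \<open>T z\<close>, which \<open>M\<close> fixes; so \<open>P\<close> is a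
  linear projection of \<open>Lip\<^sub>0\<close> onto \<open>L\<close>, and \<open>f \<mapsto> (P f, f - P f)\<close> is a linear bijection onto
  \<open>L \<oplus> ker P\<close> with inverse \<open>(T, g) \<mapsto> T + g\<close>. Finally
  \<open>Lip(f) \<le> \<parallel>P f\<parallel> + Lip(f - P f) \<le> Lip(f) + 2 Lip(f)\<close>.\<close>

lemma lipschitz_on_difference_quotient_le:
  assumes "C-lipschitz_on UNIV f"
    and "r \<in> insert 0 {norm (f x - f y) / norm (x - y) |x y. x \<noteq> y}"
  shows "r \<le> C"
  using assms lipschitz_on_nonneg[OF assms(1)] lipschitz_on_normD[OF assms(1)]
  by (auto simp: pos_divide_le_eq)

lemma lipnorm_least:
  assumes "C-lipschitz_on UNIV f"
  shows "lipnorm f \<le> C"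
  unfolding lipnorm_def
  by (rule cSup_least) (auto intro: lipschitz_on_difference_quotient_le[OF assms])

lemma lipschitz_on_lipnorm:
  assumes "C-lipschitz_on UNIV f"
  shows "(lipnorm f)-lipschitz_on UNIV f"
proof -
  let ?S = "insert 0 {norm (f x - f y) / norm (x - y) |x y. x \<noteq> y}"
  have bdd: "bdd_above ?S"
    using lipschitz_on_difference_quotient_le[OF assms] by (rule bdd_aboveI)
  show ?thesis
  proof (rule lipschitz_onI)
    show "0 \<le> lipnorm f"
      unfolding lipnorm_def by (rule cSup_upper[OF _ bdd]) simp
    show "dist (f x) (f y) \<le> lipnorm f * dist x y" for x y
    proof (cases "x = y")
      case False
      have "norm (f x - f y) / norm (x - y) \<le> lipnorm f"
        unfolding lipnorm_def by (rule cSup_upper[OF _ bdd]) (use False in blast)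
      then show ?thesis
        using False by (simp add: dist_norm pos_divide_le_eq)
    qed simp
  qed
qed

lemma lipnorm_nonneg: "C-lipschitz_on UNIV f \<Longrightarrow> 0 \<le> lipnorm f"
  by (rule lipschitz_on_nonneg[OF lipschitz_on_lipnorm])

lemma lipnorm_add_le:
  assumes "C-lipschitz_on UNIV f" and "D-lipschitz_on UNIV g"
  shows "lipnorm (\<lambda>x. f x + g x) \<le> lipnorm f + lipnorm g"
  by (rule lipnorm_least[OF lipschitz_on_add])
    (use lipschitz_on_lipnorm assms in blast)+

lemma lipnorm_diff_le:
  assumes "C-lipschitz_on UNIV f" and "D-lipschitz_on UNIV g"
  shows "lipnorm (\<lambda>x. f x - g x) \<le> lipnorm f + lipnorm g"
  by (rule lipnorm_least[OF lipschitz_on_diff])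
    (use lipschitz_on_lipnorm assms in blast)+

lemma bounded_linear_lipschitz_on_onorm:
  assumes "bounded_linear T"
  shows "(onorm T)-lipschitz_on UNIV T"
proof (rule lipschitz_onI)
  show "0 \<le> onorm T"
    using assms by (rule onorm_pos_le)
  show "dist (T x) (T y) \<le> onorm T * dist x y" for x y
    using onorm[OF assms, of "x - y"] assms by (simp add: dist_norm linear_simps)
qed

lemma lipnorm_bounded_linear:
  assumes "bounded_linear T"
  shows "lipnorm T = onorm T"
proof (rule antisym)
  have T: "(onorm T)-lipschitz_on UNIV T"
    using assms by (rule bounded_linear_lipschitz_on_onorm)
  then show "lipnorm T \<le> onorm T"
    by (rule lipnorm_least)
  show "onorm T \<le> lipnorm T"
  proof (rule onorm_bound)
    show "0 \<le> lipnorm T"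
      using T by (rule lipnorm_nonneg)
    show "norm (T x) \<le> lipnorm T * norm x" for x
      using lipschitz_on_normD[OF lipschitz_on_lipnorm[OF T], of x 0] assms
      by (simp add: linear_simps)
  qed
qed

lemma Lip0_imp_lipschitz_on: "f \<in> Lip0 \<Longrightarrow> (lipnorm f)-lipschitz_on UNIV f"
  unfolding Lip0_def using lipschitz_on_lipnorm by blast

lemma Lip0_add: "f \<in> Lip0 \<Longrightarrow> g \<in> Lip0 \<Longrightarrow> (\<lambda>x. f x + g x) \<in> Lip0"
  unfolding Lip0_def by (auto intro: lipschitz_on_add)

lemma Lip0_diff: "f \<in> Lip0 \<Longrightarrow> g \<in> Lip0 \<Longrightarrow> (\<lambda>x. f x - g x) \<in> Lip0"
  unfolding Lip0_def by (auto intro: lipschitz_on_diff)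

lemma bounded_linear_in_Lip0: "bounded_linear T \<Longrightarrow> T \<in> Lip0"
  unfolding Lip0_def
  using bounded_linear_lipschitz_on_onorm linear_0 bounded_linear.linear by blast

lemma additive_real_eq_0:
  fixes h :: "real \<Rightarrow> 'b::real_normed_vector"
  assumes add: "\<And>x y. h (x + y) = h x + h y"
    and bound: "\<And>c. norm (h c) \<le> K * \<bar>c\<bar>"
    and "h 1 = 0"
  shows "h c = 0"
proof -
  interpret additive h
    by unfold_locales (rule add)
  have h_nat: "h (real n * x) = real n *\<^sub>R h x" for n x
    by (induction n) (simp_all add: zero add distrib_right scaleR_left_distrib)
  have h_int: "h (of_int m) = 0" for m
  proof (cases "0 \<le> m")
    case True
    then show ?thesis
      using h_nat[of "nat m" 1] \<open>h 1 = 0\<close> by simp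
  next
    case False
    then show ?thesis
      using h_nat[of "nat (- m)" 1] \<open>h 1 = 0\<close> minus[of "of_int (- m)"] by simp
  qed
  have "0 \<le> K"
    using bound[of 1] \<open>h 1 = 0\<close> by simp
  \<comment> \<open>\<open>h (n c)\<close> only depends on the fractional part of \<open>n c\<close>, so \<open>n \<parallel>h c\<parallel>\<close> stays below \<open>K\<close>.\<close>
  have multiples_bounded: "real n * norm (h c) \<le> K" for n
  proof -
    define t where "t = real n * c"
    have "h t = h (t - of_int \<lfloor>t\<rfloor>)"
      using add[of "of_int \<lfloor>t\<rfloor>" "t - of_int \<lfloor>t\<rfloor>"] h_int by simp
    also have "norm \<dots> \<le> K * \<bar>t - of_int \<lfloor>t\<rfloor>\<bar>"
      by (rule bound)
    also have "\<dots> \<le> K * 1"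
      by (intro mult_left_mono \<open>0 \<le> K\<close>) (use floor_correct[of t] in arith)
    finally show ?thesis
      using h_nat[of n c] by (simp add: t_def)
  qed
  show "h c = 0"
  proof (rule ccontr)
    assume "h c \<noteq> 0"
    then obtain n where "K < real n * norm (h c)"
      using ex_less_of_nat_mult[of "norm (h c)" K] by auto
    with multiples_bounded[of n] show False
      by simp
  qed
qed

lemma additive_bounded_imp_bounded_linear:
  fixes Q :: "'a::real_normed_vector \<Rightarrow> 'b::real_normed_vector"
  assumes add: "\<And>x y. Q (x + y) = Q x + Q y"
    and bound: "\<And>x. norm (Q x) \<le> K * norm x"
  shows "bounded_linear Q"
proof (rule bounded_linear_intro)
  show "Q (x + y) = Q x + Q y" for x y
    by (rule add)
  show "norm (Q x) \<le> norm x * K" for x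
    using bound[of x] by (simp add: mult.commute)
  show "Q (r *\<^sub>R x) = r *\<^sub>R Q x" for r x
  proof -
    have "Q (r *\<^sub>R x) - r *\<^sub>R Q x = 0"
    proof (rule additive_real_eq_0[where h = "\<lambda>c. Q (c *\<^sub>R x) - c *\<^sub>R Q x"])
      show "Q ((a + b) *\<^sub>R x) - (a + b) *\<^sub>R Q x
          = (Q (a *\<^sub>R x) - a *\<^sub>R Q x) + (Q (b *\<^sub>R x) - b *\<^sub>R Q x)" for a b
        by (simp add: add scaleR_add_left algebra_simps)
      show "norm (Q (c *\<^sub>R x) - c *\<^sub>R Q x) \<le> (K * norm x + norm (Q x)) * \<bar>c\<bar>" for c
        using norm_triangle_ineq4[of "Q (c *\<^sub>R x)" "c *\<^sub>R Q x"] bound[of "c *\<^sub>R x"]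
        by (simp add: algebra_simps)
    qed simp
    then show ?thesis
      by simp
  qed
qed

lemma supn_least: "(\<And>x. norm (g x) \<le> B) \<Longrightarrow> 0 \<le> B \<Longrightarrow> supn g \<le> B"
  unfolding supn_def by (rule cSup_least) auto

lemma linf_translate: "g \<in> linf \<Longrightarrow> (\<lambda>x. g (w + x)) \<in> linf"
  unfolding linf_def by (auto intro: bounded_subset[of "range g"])

lemma increment_norm_le:
  fixes f :: "'a::real_normed_vector \<Rightarrow> 'b::real_normed_vector"
  assumes "C-lipschitz_on UNIV f"
  shows "norm (f (z + x) - f x) \<le> lipnorm f * norm z"
  using lipschitz_on_normD[OF lipschitz_on_lipnorm[OF assms], of "z + x" x] by simp

lemma increment_in_linf:
  fixes f :: "'a::real_normed_vector \<Rightarrow> 'b::real_normed_vector"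
  assumes "C-lipschitz_on UNIV f"
  shows "(\<lambda>x. f (z + x) - f x) \<in> linf"
  unfolding linf_def bounded_iff using increment_norm_le[OF assms] by blast

context
  fixes M :: "('a::real_normed_vector \<Rightarrow> 'b::real_normed_vector) \<Rightarrow> 'b"
  assumes M: "gen_inv_mean M"
begin

lemma gen_inv_mean_lincomb:
  "g \<in> linf \<Longrightarrow> h \<in> linf \<Longrightarrow> M (\<lambda>x. a *\<^sub>R g x + b *\<^sub>R h x) = a *\<^sub>R M g + b *\<^sub>R M h"
  using M unfolding gen_inv_mean_def by blast

lemma gen_inv_mean_norm_le: "g \<in> linf \<Longrightarrow> norm (M g) \<le> supn g"
  using M unfolding gen_inv_mean_def by blast

lemma gen_inv_mean_translate: "g \<in> linf \<Longrightarrow> M (\<lambda>x. g (w + x)) = M g"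
  using M unfolding gen_inv_mean_def by blast

lemma gen_inv_mean_const: "M (\<lambda>_. y) = y"
  using M unfolding gen_inv_mean_def by blast

lemma PXY_norm_le:
  assumes "C-lipschitz_on UNIV f"
  shows "norm (PXY M f z) \<le> lipnorm f * norm z"
proof -
  have "norm (PXY M f z) \<le> supn (\<lambda>x. f (z + x) - f x)"
    unfolding PXY_def using increment_in_linf[OF assms] by (rule gen_inv_mean_norm_le)
  also have "\<dots> \<le> lipnorm f * norm z"
    using increment_norm_le[OF assms] lipnorm_nonneg[OF assms] by (simp add: supn_least)
  finally show ?thesis .
qed

lemma PXY_add:
  assumes "C-lipschitz_on UNIV f"
  shows "PXY M f (z + w) = PXY M f z + PXY M f w"
proof -
  let ?\<phi> = "\<lambda>z x. f (z + x) - f x"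
  have increment_split: "?\<phi> (z + w) = (\<lambda>x. 1 *\<^sub>R ?\<phi> z (w + x) + 1 *\<^sub>R ?\<phi> w x)"
    by (simp add: add.assoc)
  have "PXY M f (z + w) = M (\<lambda>x. 1 *\<^sub>R ?\<phi> z (w + x) + 1 *\<^sub>R ?\<phi> w x)"
    unfolding PXY_def increment_split ..
  also have "\<dots> = 1 *\<^sub>R M (\<lambda>x. ?\<phi> z (w + x)) + 1 *\<^sub>R M (?\<phi> w)"
    using linf_translate[OF increment_in_linf[OF assms]] increment_in_linf[OF assms]
    by (rule gen_inv_mean_lincomb)
  also have "\<dots> = PXY M f z + PXY M f w"
    unfolding PXY_def using gen_inv_mean_translate[OF increment_in_linf[OF assms]] by simp
  finally show ?thesis .
qed

lemma PXY_bounded_linear: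
  assumes "C-lipschitz_on UNIV f"
  shows "bounded_linear (PXY M f)"
  using PXY_add[OF assms] PXY_norm_le[OF assms] by (rule additive_bounded_imp_bounded_linear)

lemma onorm_PXY_le:
  assumes "C-lipschitz_on UNIV f"
  shows "onorm (PXY M f) \<le> lipnorm f"
  using lipnorm_nonneg[OF assms] PXY_norm_le[OF assms] by (rule onorm_bound)

lemma PXY_lincomb:
  assumes "C-lipschitz_on UNIV f" and "D-lipschitz_on UNIV g"
  shows "PXY M (\<lambda>x. a *\<^sub>R f x + b *\<^sub>R g x) = (\<lambda>z. a *\<^sub>R PXY M f z + b *\<^sub>R PXY M g z)"
proof
  fix z
  have "(\<lambda>x. a *\<^sub>R f (z + x) + b *\<^sub>R g (z + x) - (a *\<^sub>R f x + b *\<^sub>R g x))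
      = (\<lambda>x. a *\<^sub>R (f (z + x) - f x) + b *\<^sub>R (g (z + x) - g x))"
    by (simp add: algebra_simps)
  then show "PXY M (\<lambda>x. a *\<^sub>R f x + b *\<^sub>R g x) z = a *\<^sub>R PXY M f z + b *\<^sub>R PXY M g z"
    unfolding PXY_def
    using gen_inv_mean_lincomb[OF increment_in_linf[OF assms(1)] increment_in_linf[OF assms(2)]]
    by simp
qed

lemma PXY_bounded_linear_eq:
  assumes "bounded_linear T"
  shows "PXY M T = T"
proof
  fix z
  have "(\<lambda>x. T (z + x) - T x) = (\<lambda>_. T z)"
    using assms by (simp add: linear_simps)
  then show "PXY M T z = T z"
    unfolding PXY_def by (simp add: gen_inv_mean_const)
qed

lemma Lip0_diff_PXY_in_kerP:
  assumes "f \<in> Lip0"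
  shows "(\<lambda>x. f x - PXY M f x) \<in> kerP M"
proof -
  have f: "(lipnorm f)-lipschitz_on UNIV f"
    using assms by (rule Lip0_imp_lipschitz_on)
  have P: "bounded_linear (PXY M f)"
    using f by (rule PXY_bounded_linear)
  have diff: "(\<lambda>x. f x - PXY M f x) = (\<lambda>x. 1 *\<^sub>R f x + (- 1) *\<^sub>R PXY M f x)"
    by simp
  have "PXY M (\<lambda>x. f x - PXY M f x) = (\<lambda>_. 0)"
    unfolding diff PXY_lincomb[OF f bounded_linear_lipschitz_on_onorm[OF P]]
      PXY_bounded_linear_eq[OF P]
    by simp
  then show ?thesis
    unfolding kerP_def using Lip0_diff[OF assms bounded_linear_in_Lip0[OF P]] by simp
qed

lemma PXY_add_kerP:
  assumes "bounded_linear T" and "g \<in> kerP M"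
  shows "PXY M (\<lambda>x. T x + g x) = T"
proof -
  have "g \<in> Lip0" and Pg: "PXY M g = (\<lambda>_. 0)"
    using assms(2) unfolding kerP_def by auto
  then show ?thesis
    using PXY_lincomb[OF bounded_linear_lipschitz_on_onorm[OF assms(1)] Lip0_imp_lipschitz_on,
        of g 1 1]
      PXY_bounded_linear_eq[OF assms(1)]
    by simp
qed

lemma lipnorm_PXY_decomposition_bounds:
  assumes "f \<in> Lip0"
  shows "lipnorm f \<le> onorm (PXY M f) + lipnorm (\<lambda>x. f x - PXY M f x)"
    and "onorm (PXY M f) + lipnorm (\<lambda>x. f x - PXY M f x) \<le> 3 * lipnorm f"
proof -
  have f: "(lipnorm f)-lipschitz_on UNIV f"
    using assms by (rule Lip0_imp_lipschitz_on)
  have P: "(onorm (PXY M f))-lipschitz_on UNIV (PXY M f)"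
    using f by (intro bounded_linear_lipschitz_on_onorm PXY_bounded_linear)
  have lipnorm_P: "lipnorm (PXY M f) = onorm (PXY M f)"
    using f by (intro lipnorm_bounded_linear PXY_bounded_linear)
  have "lipnorm f = lipnorm (\<lambda>x. PXY M f x + (f x - PXY M f x))"
    by simp
  also have "\<dots> \<le> onorm (PXY M f) + lipnorm (\<lambda>x. f x - PXY M f x)"
    using lipnorm_add_le[OF P lipschitz_on_diff[OF f P]] lipnorm_P by simp
  finally show "lipnorm f \<le> onorm (PXY M f) + lipnorm (\<lambda>x. f x - PXY M f x)" .
  show "onorm (PXY M f) + lipnorm (\<lambda>x. f x - PXY M f x) \<le> 3 * lipnorm f"
    using lipnorm_diff_le[OF f P] lipnorm_P onorm_PXY_le[OF f] by simp
qed

end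

theorem mainTheorem3:
  fixes M :: "('a::banach \<Rightarrow> 'b::banach) \<Rightarrow> 'b"
    and J :: "'b \<Rightarrow> ('z::banach \<Rightarrow>\<^sub>L real)"
  assumes "dual_space_via J"
    and "gen_inv_mean M"
  defines "\<Phi> \<equiv> (\<lambda>f. (PXY M f, \<lambda>x. f x - PXY M f x))"
  shows "bij_betw \<Phi> Lip0 (Lin \<times> kerP M)
    \<and> (\<forall>f\<in>Lip0. \<forall>g\<in>Lip0. \<forall>a b::real.
          \<Phi> (\<lambda>x. a *\<^sub>R f x + b *\<^sub>R g x) =
            ((\<lambda>x. a *\<^sub>R fst (\<Phi> f) x + b *\<^sub>R fst (\<Phi> g) x),
             (\<lambda>x. a *\<^sub>R snd (\<Phi> f) x + b *\<^sub>R snd (\<Phi> g) x)))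
    \<and> (\<exists>c C. 0 < c \<and> 0 < C \<and>
          (\<forall>f\<in>Lip0. c * lipnorm f \<le> sum1norm (\<Phi> f) \<and> sum1norm (\<Phi> f) \<le> C * lipnorm f))"
proof -
  \<comment> \<open>Being a dual space only guarantees that some \<open>M\<close> exists; the argument never uses \<open>J\<close>.\<close>
  note M = assms(2)
  have "bij_betw \<Phi> Lip0 (Lin \<times> kerP M)"
  proof (rule bij_betw_byWitness[where f' = "\<lambda>(T, g) x. T x + g x"])
    show "\<Phi> ` Lip0 \<subseteq> Lin \<times> kerP M"
      using PXY_bounded_linear[OF M Lip0_imp_lipschitz_on] Lip0_diff_PXY_in_kerP[OF M]
      by (auto simp: \<Phi>_def Lin_def)
    show "(\<lambda>(T, g) x. T x + g x) ` (Lin \<times> kerP M) \<subseteq> Lip0"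
      using bounded_linear_in_Lip0 by (auto simp: Lin_def kerP_def intro: Lip0_add)
  qed (auto simp: \<Phi>_def Lin_def PXY_add_kerP[OF M])
  moreover have "\<Phi> (\<lambda>x. a *\<^sub>R f x + b *\<^sub>R g x) =
      ((\<lambda>x. a *\<^sub>R fst (\<Phi> f) x + b *\<^sub>R fst (\<Phi> g) x), (\<lambda>x. a *\<^sub>R snd (\<Phi> f) x + b *\<^sub>R snd (\<Phi> g) x))"
    if "f \<in> Lip0" and "g \<in> Lip0" for f g a b
    using PXY_lincomb[OF M Lip0_imp_lipschitz_on[OF that(1)] Lip0_imp_lipschitz_on[OF that(2)]]
    by (simp add: \<Phi>_def algebra_simps)
  moreover have "1 * lipnorm f \<le> sum1norm (\<Phi> f) \<and> sum1norm (\<Phi> f) \<le> 3 * lipnorm f"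
    if "f \<in> Lip0" for f
    using lipnorm_PXY_decomposition_bounds[OF M that] by (simp add: \<Phi>_def sum1norm_def)
  ultimately show ?thesis
    by (intro conjI exI[of _ "1::real"] exI[of _ "3::real"]) auto
qed

end
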